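(* Let $\Omega$ be a set endowed with a well-order $\le^*$, and let a group $G$ act faithfully on $\Omega$ preserving a total order $\le$ on $\Omega$. Then there exists a left-ordering of $G$ for which the pointwise stabilizer $G_{\Omega_0}$ of every initial segment $\Omega_0$ of $(\Omega,\le^* )$ is convex. Moreover, if the action has no crossings, this left-ordering is Conradian.
   Context: A left-ordering is a total order on $G$ invariant under left multiplication; a subgroup $H$ is convex if $f_1\prec h\prec f_2$ with $f_1,f_2\in H$ implies $h\in H$; a left-ordering is Conradian if for all $f\succ id$, $g\succ id$ there is $n\in\mathbb{N}$ with $fg^n\succ g$. A crossing for the action on $(\Omega,\le)$ is a 5-tuple $(f,g,u,v,w)$, $f,g\in G$, $u,v,w\in\Omega$, with $u<w<v$; $g^nu<v$ and $f^nv>u$ for all $n\in\mathbb{N}$; and $f^Nv<w<g^Mu$ for some $M,N\in\mathbb{N}$. *)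

theory Defs
  imports "HOL-Algebra.Group_Action"
begin

definition left_ordering :: "('g, 'm) monoid_scheme \<Rightarrow> ('g \<Rightarrow> 'g \<Rightarrow> bool) \<Rightarrow> bool" where
  "left_ordering G lt \<longleftrightarrow>
     (\<forall>x y. lt x y \<longrightarrow> x \<in> carrier G \<and> y \<in> carrier G) \<and>
     (\<forall>x \<in> carrier G. \<not> lt x x) \<and>
     (\<forall>x \<in> carrier G. \<forall>y \<in> carrier G. \<forall>z \<in> carrier G. lt x y \<longrightarrow> lt y z \<longrightarrow> lt x z) \<and>
     (\<forall>x \<in> carrier G. \<forall>y \<in> carrier G. x \<noteq> y \<longrightarrow> lt x y \<or> lt y x) \<and>
     (\<forall>g \<in> carrier G. \<forall>x \<in> carrier G. \<forall>y \<in> carrier G.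
        lt x y \<longrightarrow> lt (g \<otimes>\<^bsub>G\<^esub> x) (g \<otimes>\<^bsub>G\<^esub> y))"

definition convex_subgroup_wrt :: "('g, 'm) monoid_scheme \<Rightarrow> ('g \<Rightarrow> 'g \<Rightarrow> bool) \<Rightarrow> 'g set \<Rightarrow> bool" where
  "convex_subgroup_wrt G lt H \<longleftrightarrow>
     (\<forall>f1 \<in> H. \<forall>f2 \<in> H. \<forall>h \<in> carrier G. lt f1 h \<longrightarrow> lt h f2 \<longrightarrow> h \<in> H)"

definition conradian :: "('g, 'm) monoid_scheme \<Rightarrow> ('g \<Rightarrow> 'g \<Rightarrow> bool) \<Rightarrow> bool" where
  "conradian G lt \<longleftrightarrow>
     (\<forall>f \<in> carrier G. \<forall>g \<in> carrier G. lt \<one>\<^bsub>G\<^esub> f \<longrightarrow> lt \<one>\<^bsub>G\<^esub> g \<longrightarrow>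
        (\<exists>n::nat. n \<ge> 1 \<and> lt g (f \<otimes>\<^bsub>G\<^esub> (g [^]\<^bsub>G\<^esub> n))))"

definition initial_segment :: "'w set \<Rightarrow> 'w rel \<Rightarrow> 'w set \<Rightarrow> bool" where
  "initial_segment \<Omega> W \<Omega>0 \<longleftrightarrow> \<Omega>0 \<subseteq> \<Omega> \<and> (\<forall>x \<in> \<Omega>0. \<forall>y \<in> \<Omega>. (y, x) \<in> W \<longrightarrow> y \<in> \<Omega>0)"

definition pointwise_stabilizer :: "('g, 'm) monoid_scheme \<Rightarrow> ('g \<Rightarrow> 'w \<Rightarrow> 'w) \<Rightarrow> 'w set \<Rightarrow> 'g set" where
  "pointwise_stabilizer G \<phi> \<Omega>0 = {g \<in> carrier G. \<forall>x \<in> \<Omega>0. \<phi> g x = x}"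

definition strict_rel :: "'w rel \<Rightarrow> 'w \<Rightarrow> 'w \<Rightarrow> bool" where
  "strict_rel r x y \<longleftrightarrow> (x, y) \<in> r \<and> x \<noteq> y"

definition is_crossing ::
  "('g, 'm) monoid_scheme \<Rightarrow> 'w set \<Rightarrow> 'w rel \<Rightarrow> ('g \<Rightarrow> 'w \<Rightarrow> 'w) \<Rightarrow> 'g \<Rightarrow> 'g \<Rightarrow> 'w \<Rightarrow> 'w \<Rightarrow> 'w \<Rightarrow> bool" where
  "is_crossing G \<Omega> r \<phi> f g u v w \<longleftrightarrow>
     f \<in> carrier G \<and> g \<in> carrier G \<and> u \<in> \<Omega> \<and> v \<in> \<Omega> \<and> w \<in> \<Omega> \<and>
     strict_rel r u w \<and> strict_rel r w v \<and>
     (\<forall>n::nat. strict_rel r (\<phi> (g [^]\<^bsub>G\<^esub> n) u) v \<and> strict_rel r u (\<phi> (f [^]\<^bsub>G\<^esub> n) v)) \<and>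
     (\<exists>(M::nat) (N::nat). strict_rel r (\<phi> (f [^]\<^bsub>G\<^esub> N) v) w \<and> strict_rel r w (\<phi> (g [^]\<^bsub>G\<^esub> M) u))"

end

theory Submission
  imports Defs
begin

(* Order G dynamically: g \<noteq> 1 is positive iff it moves upwards the \<le>*-least point c that it
   moves, c < g c. Faithfulness makes g or g\<inverse> positive, and a product of positive elements is
   positive at the \<le>*-smaller of their first moved points, so the positive elements are the cone
   of a left-ordering. If h moves a point of an initial segment \<Omega>0, its first moved point lies in
   \<Omega>0, where multiplying h by an element fixing \<Omega>0 does not change the sign; hence h cannot lie
   between two elements of the stabilizer of \<Omega>0. Finally, let f, g > 1. If f moves a point
   \<le>*-before g does, then g < f g. Otherwise, if also f g\<^sup>2 < g, then with b the first moved
   point of g, the elements f, f g and the points b < f g b < g b form a crossing. *)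

definition cone_order :: "('g, 'm) monoid_scheme \<Rightarrow> 'g set \<Rightarrow> 'g \<Rightarrow> 'g \<Rightarrow> bool" where
  "cone_order G P a b \<longleftrightarrow> a \<in> carrier G \<and> b \<in> carrier G \<and> inv\<^bsub>G\<^esub> a \<otimes>\<^bsub>G\<^esub> b \<in> P"

lemma (in group) left_ordering_cone_order:
  assumes "P \<subseteq> carrier G" and "\<one> \<notin> P"
    and mult_closed: "\<And>a b. a \<in> P \<Longrightarrow> b \<in> P \<Longrightarrow> a \<otimes> b \<in> P"
    and total: "\<And>h. h \<in> carrier G \<Longrightarrow> h \<noteq> \<one> \<Longrightarrow> h \<in> P \<or> inv h \<in> P"
  shows "left_ordering G (cone_order G P)"
proof -
  have chain: "(inv a \<otimes> b) \<otimes> (inv b \<otimes> c) = inv a \<otimes> c"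
    if "a \<in> carrier G" "b \<in> carrier G" "c \<in> carrier G" for a b c
    using that by (simp add: m_assoc[symmetric]) (simp add: m_assoc)
  have swap: "inv (inv a \<otimes> b) = inv b \<otimes> a" if "a \<in> carrier G" "b \<in> carrier G" for a b
    using that by (simp add: inv_mult_group)
  have translate: "inv (g \<otimes> a) \<otimes> (g \<otimes> b) = inv a \<otimes> b"
    if "g \<in> carrier G" "a \<in> carrier G" "b \<in> carrier G" for g a b
    using that by (simp add: inv_mult_group m_assoc) (simp add: m_assoc[symmetric])
  have nontrivial: "inv a \<otimes> b \<noteq> \<one>" if "a \<in> carrier G" "b \<in> carrier G" "a \<noteq> b" for a b
    using that by (metis inv_closed inv_equality inv_inv)
  have irreflexive: "\<not> cone_order G P a a" for a
    using \<open>\<one> \<notin> P\<close> unfolding cone_order_def by auto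
  have transitive: "cone_order G P a c"
    if "cone_order G P a b" "cone_order G P b c" for a b c
    using that mult_closed chain unfolding cone_order_def by metis
  have connex: "cone_order G P a b \<or> cone_order G P b a"
    if "a \<in> carrier G" "b \<in> carrier G" "a \<noteq> b" for a b
    using that total[of "inv a \<otimes> b"] nontrivial swap unfolding cone_order_def by auto
  have invariant: "cone_order G P (g \<otimes> a) (g \<otimes> b)"
    if "g \<in> carrier G" "cone_order G P a b" for g a b
    using that translate unfolding cone_order_def by auto
  show ?thesis
    unfolding left_ordering_def
    using irreflexive transitive connex invariant by (auto simp: cone_order_def)
qed

lemma left_ordering_asym:
  assumes "left_ordering G lt" and "lt x y"
  shows "\<not> lt y x"
  using assms unfolding left_ordering_def by metis

sublocale group_action \<subseteq> group G
  using group_hom group_hom.axioms(1) by blast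

locale ordered_action = group_action G \<Omega> \<phi>
  for G (structure) and \<Omega> :: "'w set" and \<phi> :: "'g \<Rightarrow> 'w \<Rightarrow> 'w" +
  fixes r :: "'w rel"
  assumes linear: "linear_order_on \<Omega> r"
    and order_preserving:
      "\<And>g x y. g \<in> carrier G \<Longrightarrow> x \<in> \<Omega> \<Longrightarrow> y \<in> \<Omega> \<Longrightarrow> (x, y) \<in> r \<Longrightarrow> (\<phi> g x, \<phi> g y) \<in> r"
begin

abbreviation pt_less (infix "\<prec>" 50) where "x \<prec> y \<equiv> strict_rel r x y"
abbreviation pt_le (infix "\<preceq>" 50) where "x \<preceq> y \<equiv> (x, y) \<in> r"

lemma pt_le_in: "x \<preceq> y \<Longrightarrow> x \<in> \<Omega> \<and> y \<in> \<Omega>"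
  using linear unfolding order_on_defs by blast

lemma pt_le_refl: "x \<in> \<Omega> \<Longrightarrow> x \<preceq> x"
  using linear unfolding order_on_defs refl_on_def by blast

lemma pt_le_trans: "x \<preceq> y \<Longrightarrow> y \<preceq> z \<Longrightarrow> x \<preceq> z"
  using linear unfolding order_on_defs trans_def by blast

lemma pt_le_antisym: "x \<preceq> y \<Longrightarrow> y \<preceq> x \<Longrightarrow> x = y"
  using linear unfolding order_on_defs antisym_def by blast

lemma pt_le_total: "x \<in> \<Omega> \<Longrightarrow> y \<in> \<Omega> \<Longrightarrow> x \<preceq> y \<or> y \<preceq> x"
  using linear pt_le_refl unfolding linear_order_on_def total_on_def by metis

lemma pt_less_in: "x \<prec> y \<Longrightarrow> x \<in> \<Omega> \<and> y \<in> \<Omega>"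
  unfolding strict_rel_def using pt_le_in by blast

lemma pt_less_le_trans: "x \<prec> y \<Longrightarrow> y \<preceq> z \<Longrightarrow> x \<prec> z"
  unfolding strict_rel_def using pt_le_trans pt_le_antisym by blast

lemma pt_le_less_trans: "x \<preceq> y \<Longrightarrow> y \<prec> z \<Longrightarrow> x \<prec> z"
  unfolding strict_rel_def using pt_le_trans pt_le_antisym by blast

lemma pt_not_less: "x \<in> \<Omega> \<Longrightarrow> y \<in> \<Omega> \<Longrightarrow> \<not> x \<prec> y \<Longrightarrow> y \<preceq> x"
  unfolding strict_rel_def using pt_le_total pt_le_refl by blast

lemma act_in: "g \<in> carrier G \<Longrightarrow> x \<in> \<Omega> \<Longrightarrow> \<phi> g x \<in> \<Omega>"
  using element_image by blast

lemma act_mult: "g \<in> carrier G \<Longrightarrow> h \<in> carrier G \<Longrightarrow> x \<in> \<Omega> \<Longrightarrow> \<phi> (g \<otimes> h) x = \<phi> g (\<phi> h x)"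
  using composition_rule by blast

lemma act_inv_act: "g \<in> carrier G \<Longrightarrow> x \<in> \<Omega> \<Longrightarrow> \<phi> (inv g) (\<phi> g x) = x"
  using orbit_sym_aux by blast

lemma act_one: "x \<in> \<Omega> \<Longrightarrow> \<phi> \<one> x = x"
  by (metis id_eq_one restrict_apply')

lemma act_le: "g \<in> carrier G \<Longrightarrow> x \<preceq> y \<Longrightarrow> \<phi> g x \<preceq> \<phi> g y"
  using order_preserving pt_le_in by blast

lemma act_less:
  assumes "g \<in> carrier G" and "x \<prec> y"
  shows "\<phi> g x \<prec> \<phi> g y"
proof -
  have "x \<in> \<Omega>" "y \<in> \<Omega>" using pt_less_in assms(2) by blast+
  then show ?thesis using assms act_le inj_prop unfolding strict_rel_def inj_on_def by blast
qed

lemma act_less_iff: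
  assumes "g \<in> carrier G" "x \<in> \<Omega>" "y \<in> \<Omega>"
  shows "\<phi> g x \<prec> \<phi> g y \<longleftrightarrow> x \<prec> y"
proof
  assume "\<phi> g x \<prec> \<phi> g y"
  then have "\<phi> (inv g) (\<phi> g x) \<prec> \<phi> (inv g) (\<phi> g y)" using act_less assms(1) by simp
  then show "x \<prec> y" using assms act_inv_act by simp
qed (rule act_less[OF assms(1)])

lemma is_crossing_if_pulled_back:
  assumes f: "f \<in> carrier G" and g: "g \<in> carrier G" and b: "b \<in> \<Omega>"
    and f_b: "b \<preceq> \<phi> f b" and g_b: "b \<prec> \<phi> g b"
    and pulled_back: "\<phi> f (\<phi> g (\<phi> g b)) \<preceq> \<phi> g b"
  shows "is_crossing G \<Omega> r \<phi> f (f \<otimes> g) b (\<phi> g b) (\<phi> f (\<phi> g b))"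
proof -
  define v where "v = \<phi> g b"
  define w where "w = \<phi> f v"
  have fg: "f \<otimes> g \<in> carrier G" using f g by simp
  have v: "v \<in> \<Omega>" and w: "w \<in> \<Omega>" using act_in f g b by (simp_all add: v_def w_def)
  have "\<phi> f v \<prec> \<phi> f (\<phi> g v)" using act_less[OF f act_less[OF g g_b]] by (simp add: v_def)
  then have w_v: "w \<prec> v" using pulled_back pt_less_le_trans by (simp add: v_def w_def)
  have b_w: "b \<prec> w" using pt_le_less_trans[OF f_b act_less[OF f g_b]] by (simp add: v_def w_def)
  have fg_powers: "\<phi> ((f \<otimes> g) [^] n) b \<prec> v" for n :: nat
  proof (induction n)
    case 0
    then show ?case using g_b b act_one by (simp add: v_def)
  next
    case (Suc n)
    have "\<phi> f (\<phi> g (\<phi> ((f \<otimes> g) [^] n) b)) \<prec> \<phi> f (\<phi> g v)"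
      using act_less[OF f act_less[OF g Suc.IH]] .
    moreover have "\<phi> ((f \<otimes> g) [^] Suc n) b = \<phi> f (\<phi> g (\<phi> ((f \<otimes> g) [^] n) b))"
      using fg f g b by (simp only: nat_pow_Suc2 act_mult nat_pow_closed act_in)
    ultimately show ?case
      using pulled_back pt_less_le_trans by (simp add: v_def)
  qed
  have f_powers: "b \<prec> \<phi> (f [^] n) v" for n :: nat
  proof (induction n)
    case 0
    then show ?case using g_b v act_one by (simp add: v_def)
  next
    case (Suc n)
    have "\<phi> (f [^] Suc n) v = \<phi> f (\<phi> (f [^] n) v)"
      using f v by (simp only: nat_pow_Suc2 act_mult nat_pow_closed)
    then show ?case
      using pt_le_less_trans[OF f_b act_less[OF f Suc.IH]] by simp
  qed
  have "\<phi> (f [^] (2::nat)) v \<prec> w"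
    using act_less[OF f w_v] f v by (simp add: numeral_2_eq_2 act_mult w_def)
  moreover have "w \<prec> \<phi> ((f \<otimes> g) [^] (2::nat)) b"
    using act_less[OF f act_less[OF g b_w]] f g b
    by (simp add: numeral_2_eq_2 act_mult act_in w_def v_def)
  ultimately show ?thesis
    unfolding is_crossing_def v_def[symmetric] w_def[symmetric]
    using f fg b v w b_w w_v fg_powers f_powers by blast
qed

end

locale well_ordered_action = group_action G \<Omega> \<phi>
  for G (structure) and \<Omega> :: "'w set" and \<phi> :: "'g \<Rightarrow> 'w \<Rightarrow> 'w" +
  fixes W :: "'w rel"
  assumes well_order: "well_order_on \<Omega> W"
    and faithful: "\<And>g. g \<in> carrier G \<Longrightarrow> \<forall>x \<in> \<Omega>. \<phi> g x = x \<Longrightarrow> g = \<one>"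
begin

definition fixes_below :: "'g \<Rightarrow> 'w \<Rightarrow> bool" where
  "fixes_below h c \<longleftrightarrow> (\<forall>y \<in> \<Omega>. (y, c) \<in> W \<and> y \<noteq> c \<longrightarrow> \<phi> h y = y)"

definition first_moved :: "'g \<Rightarrow> 'w \<Rightarrow> bool" where
  "first_moved h c \<longleftrightarrow> c \<in> \<Omega> \<and> \<phi> h c \<noteq> c \<and> fixes_below h c"

lemma W_partial_order: "partial_order_on \<Omega> W"
  using well_order unfolding well_order_on_def linear_order_on_def by blast

lemma W_refl: "x \<in> \<Omega> \<Longrightarrow> (x, x) \<in> W"
  using partial_order_onD(1)[OF W_partial_order] unfolding refl_on_def by blast

lemma W_antisym: "(x, y) \<in> W \<Longrightarrow> (y, x) \<in> W \<Longrightarrow> x = y"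
  using partial_order_onD(3)[OF W_partial_order] unfolding antisym_def by blast

lemma W_total: "x \<in> \<Omega> \<Longrightarrow> y \<in> \<Omega> \<Longrightarrow> (x, y) \<in> W \<or> (y, x) \<in> W"
  using well_order W_refl unfolding well_order_on_def linear_order_on_def total_on_def by metis

lemma W_strict_trans: "(x, y) \<in> W \<Longrightarrow> (y, z) \<in> W \<Longrightarrow> y \<noteq> z \<Longrightarrow> (x, z) \<in> W \<and> x \<noteq> z"
  using partial_order_onD(2)[OF W_partial_order] W_antisym unfolding trans_def by blast

lemma fixes_below_antimono: "(d, c) \<in> W \<Longrightarrow> fixes_below h c \<Longrightarrow> fixes_below h d"
  unfolding fixes_below_def by (metis W_strict_trans)

lemma fixes_below_mult:
  "a \<in> carrier G \<Longrightarrow> b \<in> carrier G \<Longrightarrow> fixes_below a c \<Longrightarrow> fixes_below b c \<Longrightarrow> fixes_below (a \<otimes> b) c"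
  unfolding fixes_below_def using composition_rule by simp

lemma fixes_below_inv: "h \<in> carrier G \<Longrightarrow> fixes_below h c \<Longrightarrow> fixes_below (inv h) c"
  unfolding fixes_below_def using orbit_sym_aux by blast

lemma first_moved_exists:
  assumes "h \<in> carrier G" and "h \<noteq> \<one>"
  shows "\<exists>c. first_moved h c"
proof -
  let ?moved = "{x \<in> \<Omega>. \<phi> h x \<noteq> x}"
  have "wf (W - Id)" using well_order unfolding well_order_on_def by blast
  moreover obtain d where "d \<in> ?moved" using faithful assms by blast
  ultimately obtain c where "c \<in> ?moved" "\<And>y. (y, c) \<in> W - Id \<Longrightarrow> y \<notin> ?moved"
    by (rule wfE_min) blast
  then have "first_moved h c" unfolding first_moved_def fixes_below_def by blast
  then show ?thesis by blast
qed

lemma first_moved_least: "first_moved h c \<Longrightarrow> d \<in> \<Omega> \<Longrightarrow> \<phi> h d \<noteq> d \<Longrightarrow> (c, d) \<in> W"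
  unfolding first_moved_def fixes_below_def using W_total[of c d] by blast

lemma first_moved_unique: "first_moved h c \<Longrightarrow> first_moved h c' \<Longrightarrow> c = c'"
  using first_moved_least W_antisym unfolding first_moved_def by blast

lemma first_moved_inv:
  assumes "h \<in> carrier G" and "first_moved h c"
  shows "first_moved (inv h) c"
proof -
  have "\<phi> (inv h) c \<noteq> c" using assms orbit_sym_aux[of "inv h" c c] unfolding first_moved_def by auto
  then show ?thesis using assms fixes_below_inv unfolding first_moved_def by blast
qed

lemma first_moved_mult_fixing:
  assumes k: "k \<in> carrier G" "fixes_below k c" "\<phi> k c = c"
    and h: "h \<in> carrier G" "first_moved h c"
  shows "first_moved (k \<otimes> h) c" and "first_moved (h \<otimes> k) c"
proof -
  have c: "c \<in> \<Omega>" "\<phi> h c \<noteq> c" using h unfolding first_moved_def by auto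
  then have "\<phi> k (\<phi> h c) \<noteq> \<phi> k c" using k h inj_prop element_image unfolding inj_on_def by metis
  then show "first_moved (k \<otimes> h) c"
    using k h c fixes_below_mult composition_rule unfolding first_moved_def by simp
  show "first_moved (h \<otimes> k) c"
    using k h c fixes_below_mult composition_rule unfolding first_moved_def by simp
qed

end

locale ordered_well_ordered_action =
  ordered_action G \<Omega> \<phi> r + well_ordered_action G \<Omega> \<phi> W
  for G (structure) and \<Omega> :: "'w set" and \<phi> :: "'g \<Rightarrow> 'w \<Rightarrow> 'w" and r W
begin

definition positive_cone :: "'g set" where
  "positive_cone = {h \<in> carrier G. \<exists>c \<in> \<Omega>. fixes_below h c \<and> c \<prec> \<phi> h c}"

lemma first_moved_if_less: "c \<in> \<Omega> \<Longrightarrow> fixes_below h c \<Longrightarrow> c \<prec> \<phi> h c \<Longrightarrow> first_moved h c"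
  unfolding first_moved_def strict_rel_def by auto

lemma positive_cone_iff_first_moved:
  assumes "h \<in> carrier G" and "first_moved h c"
  shows "h \<in> positive_cone \<longleftrightarrow> c \<prec> \<phi> h c"
  using assms first_moved_if_less first_moved_unique
  unfolding positive_cone_def first_moved_def by blast

lemma pt_le_act_below:
  assumes "fixes_below h c" "c \<prec> \<phi> h c" "(d, c) \<in> W" "d \<in> \<Omega>"
  shows "d \<preceq> \<phi> h d"
  using assms pt_le_refl unfolding fixes_below_def strict_rel_def by (cases "d = c") auto

lemma one_notin_positive_cone: "\<one> \<notin> positive_cone"
  unfolding positive_cone_def strict_rel_def using act_one by auto

lemma positive_cone_mult:
  assumes "a \<in> positive_cone" and "b \<in> positive_cone"
  shows "a \<otimes> b \<in> positive_cone"
proof -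
  obtain c1 where a: "a \<in> carrier G" "c1 \<in> \<Omega>" "fixes_below a c1" "c1 \<prec> \<phi> a c1"
    using assms(1) unfolding positive_cone_def by blast
  obtain c2 where b: "b \<in> carrier G" "c2 \<in> \<Omega>" "fixes_below b c2" "c2 \<prec> \<phi> b c2"
    using assms(2) unfolding positive_cone_def by blast
  define c where "c = (if (c1, c2) \<in> W then c1 else c2)"
  have c: "c \<in> \<Omega>" "(c, c1) \<in> W" "(c, c2) \<in> W"
    using a b W_refl W_total unfolding c_def by auto
  have a_c: "c \<preceq> \<phi> a c" and b_c: "c \<preceq> \<phi> b c"
    using pt_le_act_below a b c by blast+
  have "c \<prec> \<phi> a c \<or> \<phi> a c \<prec> \<phi> a (\<phi> b c)"
    using a b act_less unfolding c_def by auto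
  then have "c \<prec> \<phi> a (\<phi> b c)"
    using a_c act_le[OF a(1) b_c] pt_less_le_trans pt_le_less_trans by blast
  moreover have "fixes_below (a \<otimes> b) c"
    using fixes_below_mult fixes_below_antimono a b c by blast
  ultimately show ?thesis
    unfolding positive_cone_def using a b c act_mult by auto
qed

lemma positive_cone_total:
  assumes h: "h \<in> carrier G" and "h \<noteq> \<one>"
  shows "h \<in> positive_cone \<or> inv h \<in> positive_cone"
proof -
  obtain c where c: "first_moved h c" using first_moved_exists assms by blast
  then have "c \<in> \<Omega>" "\<phi> h c \<in> \<Omega>" "\<phi> h c \<noteq> c"
    using act_in h unfolding first_moved_def by auto
  then have "c \<prec> \<phi> h c \<or> \<phi> h c \<prec> c"
    using pt_le_total[of c "\<phi> h c"] unfolding strict_rel_def by auto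
  then show ?thesis
  proof
    assume "c \<prec> \<phi> h c"
    then show ?thesis using positive_cone_iff_first_moved h c by blast
  next
    assume "\<phi> h c \<prec> c"
    then have "c \<prec> \<phi> (inv h) c" using act_less[of "inv h" "\<phi> h c" c] act_inv_act h \<open>c \<in> \<Omega>\<close> by simp
    then show ?thesis using positive_cone_iff_first_moved[of "inv h" c] first_moved_inv[OF h c] h by simp
  qed
qed

lemma left_ordering_positive_cone: "left_ordering G (cone_order G positive_cone)"
proof (rule left_ordering_cone_order)
  show "positive_cone \<subseteq> carrier G" unfolding positive_cone_def by blast
qed (use one_notin_positive_cone positive_cone_mult positive_cone_total in auto)

lemma positive_cone_inv_mult_iff:
  assumes k: "k \<in> carrier G" "fixes_below k c" "\<phi> k c = c"
    and h: "h \<in> carrier G" "first_moved h c"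
  shows "inv k \<otimes> h \<in> positive_cone \<longleftrightarrow> h \<in> positive_cone"
proof -
  have c: "c \<in> \<Omega>" "\<phi> h c \<in> \<Omega>" using h act_in unfolding first_moved_def by auto
  have inv_k: "fixes_below (inv k) c" "\<phi> (inv k) c = c"
    using k fixes_below_inv act_inv_act[OF k(1) c(1)] by simp_all
  have "first_moved (inv k \<otimes> h) c" using first_moved_mult_fixing(1) inv_k k h by simp
  then have "inv k \<otimes> h \<in> positive_cone \<longleftrightarrow> \<phi> (inv k) c \<prec> \<phi> (inv k) (\<phi> h c)"
    using positive_cone_iff_first_moved k h c inv_k act_mult by simp
  also have "\<dots> \<longleftrightarrow> h \<in> positive_cone"
    using act_less_iff positive_cone_iff_first_moved k h c by simp
  finally show ?thesis .
qed

lemma pointwise_stabilizer_fixes_below: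
  assumes "initial_segment \<Omega> W \<Omega>0" "k \<in> pointwise_stabilizer G \<phi> \<Omega>0" "c \<in> \<Omega>0"
  shows "fixes_below k c" and "\<phi> k c = c"
  using assms unfolding initial_segment_def pointwise_stabilizer_def fixes_below_def by blast+

lemma convex_pointwise_stabilizer:
  assumes seg: "initial_segment \<Omega> W \<Omega>0"
  shows "convex_subgroup_wrt G (cone_order G positive_cone) (pointwise_stabilizer G \<phi> \<Omega>0)"
  unfolding convex_subgroup_wrt_def
proof (intro ballI impI)
  fix f1 f2 h
  assume f1: "f1 \<in> pointwise_stabilizer G \<phi> \<Omega>0" and f2: "f2 \<in> pointwise_stabilizer G \<phi> \<Omega>0"
    and h: "h \<in> carrier G"
    and f1_h: "cone_order G positive_cone f1 h" and h_f2: "cone_order G positive_cone h f2"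
  show "h \<in> pointwise_stabilizer G \<phi> \<Omega>0"
  proof (rule ccontr)
    assume "h \<notin> pointwise_stabilizer G \<phi> \<Omega>0"
    then obtain d where d: "d \<in> \<Omega>0" "\<phi> h d \<noteq> d"
      using h unfolding pointwise_stabilizer_def by auto
    have "d \<in> \<Omega>" using seg d unfolding initial_segment_def by blast
    then obtain c where c: "first_moved h c" using first_moved_exists h d act_one by blast
    have "c \<in> \<Omega>0"
      using seg d c first_moved_least \<open>d \<in> \<Omega>\<close> unfolding initial_segment_def first_moved_def by blast
    then have "inv f \<otimes> h \<in> positive_cone \<longleftrightarrow> h \<in> positive_cone"
      if "f \<in> pointwise_stabilizer G \<phi> \<Omega>0" for f
      using positive_cone_inv_mult_iff pointwise_stabilizer_fixes_below[OF seg that] that h c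
      unfolding pointwise_stabilizer_def by blast
    then have "cone_order G positive_cone f2 h"
      using f1 f2 f1_h h unfolding cone_order_def pointwise_stabilizer_def by blast
    then show False
      using left_ordering_asym[OF left_ordering_positive_cone h_f2] by blast
  qed
qed

lemma cone_order_mult_if_fixes_upto:
  assumes f: "f \<in> positive_cone" "first_moved f a"
    and g: "g \<in> carrier G" "fixes_below g a" "\<phi> g a = a"
  shows "cone_order G positive_cone g (f \<otimes> g)"
proof -
  have f_carrier: "f \<in> carrier G" and a: "a \<in> \<Omega>"
    using f unfolding positive_cone_def first_moved_def by auto
  have fg: "first_moved (f \<otimes> g) a" using first_moved_mult_fixing(2)[OF g f_carrier f(2)] .
  have "\<phi> (f \<otimes> g) a = \<phi> f a" using act_mult[OF f_carrier g(1) a] g(3) by simp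
  then have "f \<otimes> g \<in> positive_cone"
    using positive_cone_iff_first_moved[OF _ fg] positive_cone_iff_first_moved[OF f_carrier f(2)]
      f(1) f_carrier g(1) by simp
  then have "inv g \<otimes> (f \<otimes> g) \<in> positive_cone"
    using positive_cone_inv_mult_iff[OF g _ fg] f_carrier g(1) by simp
  then show ?thesis using f_carrier g(1) unfolding cone_order_def by simp
qed

lemma is_crossing_if_not_cone_order_mult_square:
  assumes f: "f \<in> carrier G" "fixes_below f b" "b \<preceq> \<phi> f b"
    and g: "g \<in> carrier G" "fixes_below g b" "b \<prec> \<phi> g b"
    and not_less: "\<not> cone_order G positive_cone g (f \<otimes> (g \<otimes> g))"
  shows "is_crossing G \<Omega> r \<phi> f (f \<otimes> g) b (\<phi> g b) (\<phi> f (\<phi> g b))"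
proof -
  let ?h = "inv g \<otimes> (f \<otimes> (g \<otimes> g))"
  let ?x = "\<phi> f (\<phi> g (\<phi> g b))"
  have b: "b \<in> \<Omega>" and x: "?x \<in> \<Omega>" using g(3) pt_less_in act_in f(1) g(1) by auto
  have "?h \<notin> positive_cone" using not_less f(1) g(1) unfolding cone_order_def by simp
  moreover have "fixes_below ?h b" using f g fixes_below_mult fixes_below_inv by simp
  ultimately have "\<not> b \<prec> \<phi> ?h b" using f(1) g(1) b unfolding positive_cone_def by blast
  moreover have "\<phi> ?h b = \<phi> (inv g) ?x" and "b = \<phi> (inv g) (\<phi> g b)"
    using f(1) g(1) b by (simp_all add: act_mult act_in act_inv_act)
  ultimately have "\<not> \<phi> g b \<prec> ?x" using act_less_iff[of "inv g" "\<phi> g b" ?x] g(1) b x act_in by simp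
  then have "?x \<preceq> \<phi> g b" using pt_not_less act_in g(1) b x by blast
  then show ?thesis using is_crossing_if_pulled_back f(1,3) g(1,3) b by blast
qed

lemma conradian_if_no_crossing:
  assumes no_crossing: "\<not> (\<exists>f g u v w. is_crossing G \<Omega> r \<phi> f g u v w)"
  shows "conradian G (cone_order G positive_cone)"
  unfolding conradian_def
proof (intro ballI impI)
  fix f g
  assume f: "f \<in> carrier G" and g: "g \<in> carrier G"
    and "cone_order G positive_cone \<one> f" "cone_order G positive_cone \<one> g"
  then have f_pos: "f \<in> positive_cone" and "g \<in> positive_cone" unfolding cone_order_def by auto
  obtain a where a: "a \<in> \<Omega>" "fixes_below f a" "a \<prec> \<phi> f a"
    using f_pos unfolding positive_cone_def by blast
  obtain b where b: "b \<in> \<Omega>" "fixes_below g b" "b \<prec> \<phi> g b"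
    using \<open>g \<in> positive_cone\<close> unfolding positive_cone_def by blast
  show "\<exists>n::nat. n \<ge> 1 \<and> cone_order G positive_cone g (f \<otimes> g [^] n)"
  proof (cases "(a, b) \<in> W \<and> a \<noteq> b")
    case True
    then have "fixes_below g a" "\<phi> g a = a"
      using fixes_below_antimono[of a b g] b(2) a(1) unfolding fixes_below_def by auto
    then have "cone_order G positive_cone g (f \<otimes> g [^] (1::nat))"
      using cone_order_mult_if_fixes_upto[OF f_pos first_moved_if_less[OF a] g] g by simp
    then show ?thesis by (intro exI[of _ 1]) simp
  next
    case False
    then have "(b, a) \<in> W" using W_total[OF a(1) b(1)] W_refl[OF a(1)] by auto
    then have f_b: "fixes_below f b" "b \<preceq> \<phi> f b"
      using fixes_below_antimono[OF _ a(2)] pt_le_act_below[OF a(2,3) _ b(1)] by auto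
    have "cone_order G positive_cone g (f \<otimes> g [^] (2::nat))"
    proof (rule ccontr)
      assume "\<not> cone_order G positive_cone g (f \<otimes> g [^] (2::nat))"
      then have "\<not> cone_order G positive_cone g (f \<otimes> (g \<otimes> g))"
        using g by (simp add: numeral_2_eq_2)
      then show False
        using is_crossing_if_not_cone_order_mult_square[OF f f_b g b(2,3)] no_crossing by blast
    qed
    then show ?thesis by (intro exI[of _ 2]) simp
  qed
qed

end

theorem mainTheorem18:
  fixes G :: "('g, 'm) monoid_scheme" and \<Omega> :: "'w set"
    and r :: "'w rel" and W :: "'w rel" and \<phi> :: "'g \<Rightarrow> 'w \<Rightarrow> 'w"
  assumes "group G"
    and "well_order_on \<Omega> W"
    and "linear_order_on \<Omega> r"
    and "group_action G \<Omega> \<phi>"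
    and faithful: "\<forall>g \<in> carrier G. (\<forall>x \<in> \<Omega>. \<phi> g x = x) \<longrightarrow> g = \<one>\<^bsub>G\<^esub>"
    and order_preserving: "\<forall>g \<in> carrier G. \<forall>x \<in> \<Omega>. \<forall>y \<in> \<Omega>. (x, y) \<in> r \<longrightarrow> (\<phi> g x, \<phi> g y) \<in> r"
  shows "\<exists>lt. left_ordering G lt \<and>
           (\<forall>\<Omega>0. initial_segment \<Omega> W \<Omega>0 \<longrightarrow>
                  convex_subgroup_wrt G lt (pointwise_stabilizer G \<phi> \<Omega>0)) \<and>
           ((\<not> (\<exists>f g u v w. is_crossing G \<Omega> r \<phi> f g u v w)) \<longrightarrow> conradian G lt)"
proof -
  interpret ordered_well_ordered_action G \<Omega> \<phi> r W
    unfolding ordered_well_ordered_action_def ordered_action_def ordered_action_axioms_def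
      well_ordered_action_def well_ordered_action_axioms_def
    using assms by blast
  show ?thesis
    using left_ordering_positive_cone convex_pointwise_stabilizer conradian_if_no_crossing
    by (intro exI[of _ "cone_order G positive_cone"]) blast
qed

end
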